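(* Suppose (S) and (L) hold and: (AR1) $\operatorname{cov}(W_i^K,W_j^K)=\rho^{|i-j|}$ for some $\rho\in(-1,1)$ (with $0^0=1$); (AR2) there is $C<\infty$ with $\sup_{i\le K}|\pi_i^K|\le C/\sqrt K$ for all $K$; (AR3) $\sum_{i\ne j}\pi_i^K\pi_j^K\rho^{|i-j|}/\sum_{i=1}^K(\pi_i^K)^2$ converges to a value in $[-\infty,\infty]$; (AR4) there is $\epsilon>0$ with $\operatorname{var}(\sum_{i=1}^K\pi_i^KW_i^K)>\epsilon$ for all $K$. Then (P) holds.
   Context: For each $K$, $W^K=(W_1^K,\dots,W_K^K)$ is a random vector and $\pi^K\in\mathbb R^K$. $S\in\{0,1\}^K$ is random, independent of everything else, with moments $\operatorname{var}_S$ etc.; $d_1=\sum_iS_i$, $d_2=K-d_1$. (S) $S$ is uniform over vectors in $\{0,1\}^K$ with exactly $d_1$ ones. (L) $d_1,K\to\infty$ with $d_2/d_1\to r\in(0,\infty)$. (P): (P1) there are $0<\epsilon\le M<\infty$ with $\epsilon\le\operatorname{var}(\sum_i\pi_i^KW_i^K)\le M$ for all $K$; (P2) $\operatorname{var}_S(\sum_{i,j}S_iS_j\operatorname{cov}(\pi_i^KW_i^K,\pi_j^KW_j^K))\to0$ and the same with $S_i,S_j$ replaced by $1-S_i,1-S_j$; (P3) $\sum_i\operatorname{var}(\pi_i^KW_i^K)/\operatorname{var}(\sum_i\pi_i^KW_i^K)$ converges to a finite limit. *)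

theory Defs
  imports "HOL-Probability.Probability"
begin

definition cov :: "'a measure \<Rightarrow> ('a \<Rightarrow> real) \<Rightarrow> ('a \<Rightarrow> real) \<Rightarrow> real" where
  "cov M X Y = (\<integral>x. (X x - (\<integral>y. X y \<partial>M)) * (Y x - (\<integral>y. Y y \<partial>M)) \<partial>M)"

definition var :: "'a measure \<Rightarrow> ('a \<Rightarrow> real) \<Rightarrow> real" where
  "var M X = (\<integral>x. (X x - (\<integral>y. X y \<partial>M))^2 \<partial>M)"

text \<open>Distribution of S: uniform over 0/1 vectors of length K with exactly d ones,
  encoded by the set A = {i. S_i = 1} of indices in {1..K}.\<close>
definition Sdist :: "nat \<Rightarrow> nat \<Rightarrow> nat set measure" where
  "Sdist K d = measure_pmf (pmf_of_set {A. A \<subseteq> {1..K} \<and> card A = d})"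

end

theory Submission
  imports Defs
begin

text \<open>Write \<open>c\<^sub>i\<^sub>j = cov(\<pi>\<^sub>iW\<^sub>i, \<pi>\<^sub>jW\<^sub>j) = \<pi>\<^sub>i\<pi>\<^sub>j\<rho>\<^bsup>|i-j|\<^esup>\<close>. By (AR2),
  \<open>|c\<^sub>i\<^sub>j| \<le> C\<^sup>2/K \<cdot> |\<rho>|\<^bsup>|i-j|\<^esup>\<close>, so all row and column sums of \<open>(|c\<^sub>i\<^sub>j|)\<close> are \<open>O(1/K)\<close>.

  For (P2), the variance of \<open>\<Sum>\<^sub>i\<^sub>,\<^sub>j\<^sub>\<in>\<^sub>A c\<^sub>i\<^sub>j\<close> over a uniform \<open>d\<close>-subset \<open>A\<close> equals
  \<open>\<Sum> c\<^sub>i\<^sub>j c\<^sub>k\<^sub>l (q(|{i,j,k,l}|) - q(|{i,j}|) q(|{k,l}|))\<close>, where \<open>q(m)\<close> is the probability that \<open>A\<close>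
  contains a fixed \<open>m\<close>-set. These weights are bounded when \<open>{i,j}\<close> meets \<open>{k,l}\<close> and are \<open>O(1/K)\<close>
  otherwise, which makes the variance \<open>O(K R\<^sup>2)\<close> for the row-sum bound \<open>R = O(1/K)\<close>. The
  complementary form is the same form for the complementary \<open>(K-d)\<close>-subset.

  For (P1) and (P3), AM-GM bounds \<open>var(\<Sum>\<pi>\<^sub>iW\<^sub>i)\<close> by \<open>2/(1-|\<rho>|) \<Sum>\<pi>\<^sub>i\<^sup>2 \<le> 2C\<^sup>2/(1-|\<rho>|)\<close>. Together with
  (AR4) this confines the ratio in (AR3) to a compact interval, so its limit is finite and the
  ratio in (P3) converges.\<close>

section \<open>Variance of weighted sums\<close>

lemma cov_scaled: "cov M (\<lambda>x. a * X x) (\<lambda>x. b * Y x) = a * b * cov M X Y"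
proof -
  have "cov M (\<lambda>x. a * X x) (\<lambda>x. b * Y x) =
      (\<integral>x. (a * b) * ((X x - (\<integral>y. X y \<partial>M)) * (Y x - (\<integral>y. Y y \<partial>M))) \<partial>M)"
    unfolding cov_def by (simp add: algebra_simps)
  then show ?thesis unfolding cov_def by simp
qed

lemma var_eq_cov: "var M X = cov M X X"
  unfolding var_def cov_def by (simp add: power2_eq_square)

lemma var_nonneg: "0 \<le> var M X"
  unfolding var_def by (rule Bochner_Integration.integral_nonneg) simp

lemma integrable_mult_if_square_integrable:
  fixes X Y :: "'a \<Rightarrow> real"
  assumes "X \<in> borel_measurable M" "Y \<in> borel_measurable M"
    and "integrable M (\<lambda>x. (X x)^2)" "integrable M (\<lambda>x. (Y x)^2)"
  shows "integrable M (\<lambda>x. X x * Y x)"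
proof (rule Bochner_Integration.integrable_bound[of _ "\<lambda>x. (X x)^2 + (Y x)^2"])
  show "integrable M (\<lambda>x. (X x)^2 + (Y x)^2)" using assms by simp
  show "(\<lambda>x. X x * Y x) \<in> borel_measurable M" using assms by simp
  have "\<bar>X x * Y x\<bar> \<le> (X x)^2 + (Y x)^2" for x
  proof -
    have "2 * (\<bar>X x\<bar> * \<bar>Y x\<bar>) \<le> (X x)^2 + (Y x)^2"
      using sum_squares_bound[of "\<bar>X x\<bar>" "\<bar>Y x\<bar>"] by simp
    moreover have "0 \<le> \<bar>X x\<bar> * \<bar>Y x\<bar>" by simp
    ultimately show ?thesis unfolding abs_mult by linarith
  qed
  then show "AE x in M. norm (X x * Y x) \<le> norm ((X x)^2 + (Y x)^2)" by simp
qed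

lemma var_linear_combination:
  assumes P: "prob_space M" and fin: "finite I"
    and meas: "\<And>i. i \<in> I \<Longrightarrow> W i \<in> borel_measurable M"
    and sq: "\<And>i. i \<in> I \<Longrightarrow> integrable M (\<lambda>x. (W i x)^2)"
  shows "var M (\<lambda>x. \<Sum>i\<in>I. p i * W i x) = (\<Sum>i\<in>I. \<Sum>j\<in>I. p i * p j * cov M (W i) (W j))"
proof -
  interpret prob_space M by (rule P)
  have iW: "integrable M (W i)" if "i \<in> I" for i
    using square_integrable_imp_integrable[OF meas[OF that] sq[OF that]] .
  define \<mu> where "\<mu> i = (\<integral>y. W i y \<partial>M)" for i
  have iV: "integrable M (\<lambda>x. (W i x - \<mu> i) * (W j x - \<mu> j))" if "i \<in> I" "j \<in> I" for i j
  proof -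
    have "integrable M (\<lambda>x. W i x * W j x - \<mu> j * W i x - \<mu> i * W j x + \<mu> i * \<mu> j)"
      using integrable_mult_if_square_integrable[OF meas[OF that(1)] meas[OF that(2)] sq[OF that(1)] sq[OF that(2)]]
        iW that
      by simp
    then show ?thesis by (simp add: algebra_simps)
  qed
  have mean: "(\<integral>y. (\<Sum>i\<in>I. p i * W i y) \<partial>M) = (\<Sum>i\<in>I. p i * \<mu> i)"
    using iW by (simp add: \<mu>_def)
  have "var M (\<lambda>x. \<Sum>i\<in>I. p i * W i x) =
     (\<integral>x. (\<Sum>i\<in>I. \<Sum>j\<in>I. p i * p j * ((W i x - \<mu> i) * (W j x - \<mu> j))) \<partial>M)"
    unfolding var_def mean
  proof (rule Bochner_Integration.integral_cong[OF refl])
    fix x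
    have "(\<Sum>i\<in>I. p i * W i x) - (\<Sum>i\<in>I. p i * \<mu> i) = (\<Sum>i\<in>I. p i * (W i x - \<mu> i))"
      by (simp add: sum_subtractf right_diff_distrib)
    then show "((\<Sum>i\<in>I. p i * W i x) - (\<Sum>i\<in>I. p i * \<mu> i))\<^sup>2 =
      (\<Sum>i\<in>I. \<Sum>j\<in>I. p i * p j * ((W i x - \<mu> i) * (W j x - \<mu> j)))"
      by (simp add: power2_eq_square sum_product algebra_simps)
  qed
  also have "\<dots> = (\<Sum>i\<in>I. \<Sum>j\<in>I. p i * p j * (\<integral>x. (W i x - \<mu> i) * (W j x - \<mu> j) \<partial>M))"
    using iV by (simp add: Bochner_Integration.integral_sum)
  also have "\<dots> = (\<Sum>i\<in>I. \<Sum>j\<in>I. p i * p j * cov M (W i) (W j))"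
    unfolding cov_def \<mu>_def by simp
  finally show ?thesis .
qed

lemma var_weighted_sum_ar:
  assumes "prob_space M"
    and "\<And>i. i \<in> {1..K} \<Longrightarrow> W i \<in> borel_measurable M"
    and "\<And>i. i \<in> {1..K} \<Longrightarrow> integrable M (\<lambda>x. (W i x)^2)"
    and "\<And>i j. i \<in> {1..K} \<Longrightarrow> j \<in> {1..K} \<Longrightarrow> cov M (W i) (W j) = \<rho> ^ nat \<bar>int i - int j\<bar>"
  shows "var M (\<lambda>x. \<Sum>i\<in>{1..K}. p i * W i x) = (\<Sum>i\<in>{1..K}. \<Sum>j\<in>{1..K}. p i * p j * \<rho> ^ nat \<bar>int i - int j\<bar>)"
proof -
  have "var M (\<lambda>x. \<Sum>i\<in>{1..K}. p i * W i x) = (\<Sum>i\<in>{1..K}. \<Sum>j\<in>{1..K}. p i * p j * cov M (W i) (W j))"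
    by (rule var_linear_combination) (use assms in auto)
  also have "\<dots> = (\<Sum>i\<in>{1..K}. \<Sum>j\<in>{1..K}. p i * p j * \<rho> ^ nat \<bar>int i - int j\<bar>)"
    using assms(4) by (intro sum.cong refl) simp
  finally show ?thesis .
qed

section \<open>Inclusion probabilities of uniform random subsets\<close>

lemma card_supersets:
  assumes "finite U" "B \<subseteq> U" "card B \<le> d"
  shows "card {A. A \<subseteq> U \<and> card A = d \<and> B \<subseteq> A} = (card U - card B) choose (d - card B)"
proof -
  have fB: "finite B" using assms finite_subset by blast
  have "bij_betw (\<lambda>A. A - B) {A. A \<subseteq> U \<and> card A = d \<and> B \<subseteq> A}
      {A'. A' \<subseteq> U - B \<and> card A' = d - card B}"
  proof (rule bij_betw_byWitness[where f' = "\<lambda>A'. A' \<union> B"])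
    show "(\<lambda>A. A - B) ` {A. A \<subseteq> U \<and> card A = d \<and> B \<subseteq> A} \<subseteq> {A'. A' \<subseteq> U - B \<and> card A' = d - card B}"
    proof
      fix x assume "x \<in> (\<lambda>A. A - B) ` {A. A \<subseteq> U \<and> card A = d \<and> B \<subseteq> A}"
      then obtain A where A: "A \<subseteq> U" "card A = d" "B \<subseteq> A" "x = A - B" by auto
      have "finite A" using A assms finite_subset by blast
      then show "x \<in> {A'. A' \<subseteq> U - B \<and> card A' = d - card B}"
        using A by (auto simp: card_Diff_subset fB)
    qed
    show "(\<lambda>A'. A' \<union> B) ` {A'. A' \<subseteq> U - B \<and> card A' = d - card B} \<subseteq> {A. A \<subseteq> U \<and> card A = d \<and> B \<subseteq> A}"
    proof
      fix x assume "x \<in> (\<lambda>A'. A' \<union> B) ` {A'. A' \<subseteq> U - B \<and> card A' = d - card B}"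
      then obtain A where A: "A \<subseteq> U - B" "card A = d - card B" "x = A \<union> B" by auto
      have "finite A" using A assms finite_subset by blast
      moreover have "A \<inter> B = {}" using A by auto
      ultimately have "card x = d" using A assms fB by (simp add: card_Un_disjoint)
      then show "x \<in> {A. A \<subseteq> U \<and> card A = d \<and> B \<subseteq> A}" using A assms by auto
    qed
  qed auto
  then have "card {A. A \<subseteq> U \<and> card A = d \<and> B \<subseteq> A} = card {A'. A' \<subseteq> U - B \<and> card A' = d - card B}"
    by (rule bij_betw_same_card)
  also have "\<dots> = (card U - card B) choose (d - card B)"
    using assms fB by (simp add: n_subsets card_Diff_subset)
  finally show ?thesis .
qed

text \<open>\<open>incl_prob K d m\<close> is the falling-factorial ratio \<open>(d)\<^sub>m / (K)\<^sub>m\<close>, the probability that a uniform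
  \<open>d\<close>-subset of a \<open>K\<close>-set contains a fixed \<open>m\<close>-set.\<close>

definition draw_ratio :: "nat \<Rightarrow> nat \<Rightarrow> nat \<Rightarrow> real" where
  "draw_ratio K d t = (real d - real t) / (real K - real t)"

definition incl_prob :: "nat \<Rightarrow> nat \<Rightarrow> nat \<Rightarrow> real" where
  "incl_prob K d m = (\<Prod>t<m. draw_ratio K d t)"

lemma incl_prob_Suc: "incl_prob K d (Suc m) = incl_prob K d m * draw_ratio K d m"
  by (simp add: incl_prob_def)

lemma binomial_diff_eq_incl_prob:
  assumes "m \<le> d" "d \<le> K"
  shows "real ((K - m) choose (d - m)) = real (K choose d) * incl_prob K d m"
  using assms(1)
proof (induction m)
  case 0
  then show ?case by (simp add: incl_prob_def)
next
  case (Suc m)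
  then have IH: "real ((K - m) choose (d - m)) = real (K choose d) * incl_prob K d m" by simp
  have "(d - m) * ((K - m) choose (d - m)) = (K - m) * ((K - m - 1) choose (d - m - 1))"
    using times_binomial_minus1_eq[of "d - m" "K - m"] Suc by simp
  then have "real (d - m) * real ((K - m) choose (d - m)) = real (K - m) * real ((K - Suc m) choose (d - Suc m))"
    unfolding of_nat_mult[symmetric] of_nat_eq_iff by (simp add: diff_diff_add)
  moreover have "real (K - m) > 0" using Suc assms by simp
  ultimately have "real ((K - Suc m) choose (d - Suc m)) = real ((K - m) choose (d - m)) * (real (d - m) / real (K - m))"
    by (simp add: field_simps)
  moreover have "incl_prob K d (Suc m) = incl_prob K d m * (real (d - m) / real (K - m))"
    using Suc assms by (simp add: incl_prob_Suc draw_ratio_def of_nat_diff)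
  ultimately show ?case unfolding IH by simp
qed

lemma card_supersets_div_binomial:
  assumes "B \<subseteq> {1..K}" "d \<le> K"
  shows "real (card {A. A \<subseteq> {1..K} \<and> card A = d \<and> B \<subseteq> A}) / real (K choose d) = incl_prob K d (card B)"
proof (cases "card B \<le> d")
  case True
  then show ?thesis
    using card_supersets[of "{1..K}" B d] binomial_diff_eq_incl_prob[OF True assms(2)] assms by simp
next
  case False
  have "card B \<le> card A" if "A \<subseteq> {1..K}" "B \<subseteq> A" for A
    using that by (meson card_mono finite_atLeastAtMost finite_subset)
  then have "{A. A \<subseteq> {1..K} \<and> card A = d \<and> B \<subseteq> A} = {}" using False by force
  moreover have "incl_prob K d (card B) = 0"
    unfolding incl_prob_def using False by (intro prod_zero bexI[of _ d]) (auto simp: draw_ratio_def)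
  ultimately show ?thesis by simp
qed

abbreviation ksubsets :: "nat \<Rightarrow> nat \<Rightarrow> nat set set" where
  "ksubsets K d \<equiv> {A. A \<subseteq> {1..K} \<and> card A = d}"

lemma finite_ksubsets: "finite (ksubsets K d)"
  by (rule finite_subset[of _ "Pow {1..K}"]) auto

lemma card_ksubsets: "card (ksubsets K d) = K choose d"
  by (simp add: n_subsets)

lemma ksubsets_nonempty: "d \<le> K \<Longrightarrow> ksubsets K d \<noteq> {}"
  using card_ksubsets[of K d] by (metis card.empty zero_less_binomial_iff less_irrefl)

lemma prob_space_Sdist: "prob_space (Sdist K d)"
  unfolding Sdist_def by (rule prob_space_measure_pmf)

lemma integrable_Sdist: "d \<le> K \<Longrightarrow> integrable (Sdist K d) (f :: nat set \<Rightarrow> real)"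
  unfolding Sdist_def
  by (rule integrable_measure_pmf_finite) (use finite_ksubsets[of K d] ksubsets_nonempty[of d K] in simp)

lemma expectation_Sdist_superset:
  assumes "B \<subseteq> {1..K}" "d \<le> K"
  shows "(\<integral>A. of_bool (B \<subseteq> A) \<partial>Sdist K d) = incl_prob K d (card B)"
proof -
  have "(\<integral>A. of_bool (B \<subseteq> A) \<partial>Sdist K d) = (\<integral>A. indicator {A. B \<subseteq> A} A \<partial>Sdist K d)"
    by (simp add: indicator_def)
  also have "\<dots> = measure (Sdist K d) {A. B \<subseteq> A}"
    by (simp add: Sdist_def)
  also have "\<dots> = real (card (ksubsets K d \<inter> {A. B \<subseteq> A})) / real (card (ksubsets K d))"
    unfolding Sdist_def using finite_ksubsets ksubsets_nonempty[OF assms(2)] by (simp add: measure_pmf_of_set)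
  also have "ksubsets K d \<inter> {A. B \<subseteq> A} = {A. A \<subseteq> {1..K} \<and> card A = d \<and> B \<subseteq> A}" by auto
  also have "card (ksubsets K d) = K choose d" by (rule card_ksubsets)
  finally show ?thesis using card_supersets_div_binomial[OF assms] by simp
qed

section \<open>Variance of random quadratic forms\<close>

lemma var_Sdist_quadratic_form:
  fixes c :: "nat \<Rightarrow> nat \<Rightarrow> real"
  assumes "d \<le> K"
  defines "I \<equiv> {1..K}"
  shows "var (Sdist K d) (\<lambda>A. \<Sum>i\<in>I. \<Sum>j\<in>I. of_bool (i \<in> A) * of_bool (j \<in> A) * c i j) =
    (\<Sum>i\<in>I. \<Sum>j\<in>I. \<Sum>k\<in>I. \<Sum>l\<in>I. c i j * c k l *
        (incl_prob K d (card {i,j,k,l}) - incl_prob K d (card {i,j}) * incl_prob K d (card {k,l})))"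
proof -
  interpret P: prob_space "Sdist K d" by (rule prob_space_Sdist)
  define T where "T A = (\<Sum>i\<in>I. \<Sum>j\<in>I. of_bool (i \<in> A) * of_bool (j \<in> A) * c i j)" for A
  have "var (Sdist K d) T = P.expectation (\<lambda>A. (T A)^2) - (P.expectation T)^2"
    unfolding var_def by (rule P.variance_eq) (use integrable_Sdist[OF assms(1)] in auto)
  also have "P.expectation T = (\<Sum>i\<in>I. \<Sum>j\<in>I. c i j * incl_prob K d (card {i,j}))"
  proof -
    have pair: "P.expectation (\<lambda>A. of_bool (i \<in> A) * of_bool (j \<in> A)) = incl_prob K d (card {i,j})"
      if "i \<in> I" "j \<in> I" for i j
      using expectation_Sdist_superset[of "{i,j}" K d] that assms(1) unfolding I_def by (simp add: of_bool_conj)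
    have "P.expectation T = (\<Sum>i\<in>I. \<Sum>j\<in>I. c i j * P.expectation (\<lambda>A. of_bool (i \<in> A) * of_bool (j \<in> A)))"
      unfolding T_def using integrable_Sdist[OF assms(1)]
      by (simp add: Bochner_Integration.integral_sum mult.commute)
    then show ?thesis by (simp add: pair)
  qed
  also have "P.expectation (\<lambda>A. (T A)^2) =
      (\<Sum>i\<in>I. \<Sum>j\<in>I. \<Sum>k\<in>I. \<Sum>l\<in>I. c i j * c k l * incl_prob K d (card {i,j,k,l}))"
  proof -
    have quad: "P.expectation (\<lambda>A. of_bool (i \<in> A) * of_bool (j \<in> A) * of_bool (k \<in> A) * of_bool (l \<in> A))
        = incl_prob K d (card {i,j,k,l})" if "i \<in> I" "j \<in> I" "k \<in> I" "l \<in> I" for i j k l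
      using expectation_Sdist_superset[of "{i,j,k,l}" K d] that assms(1) unfolding I_def
      by (simp add: of_bool_conj mult.assoc)
    have sq: "(T A)^2 = (\<Sum>i\<in>I. \<Sum>j\<in>I. \<Sum>k\<in>I. \<Sum>l\<in>I.
        (c i j * c k l) * (of_bool (i \<in> A) * of_bool (j \<in> A) * of_bool (k \<in> A) * of_bool (l \<in> A)))" for A
      unfolding T_def power2_eq_square sum_distrib_right sum_distrib_left
      by (intro sum.cong refl) (auto simp: mult_ac)
    have "P.expectation (\<lambda>A. (T A)^2) = (\<Sum>i\<in>I. \<Sum>j\<in>I. \<Sum>k\<in>I. \<Sum>l\<in>I. (c i j * c k l) *
        P.expectation (\<lambda>A. of_bool (i \<in> A) * of_bool (j \<in> A) * of_bool (k \<in> A) * of_bool (l \<in> A)))"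
      unfolding sq using integrable_Sdist[OF assms(1)]
      by (simp only: Bochner_Integration.integral_sum Bochner_Integration.integral_mult_right_zero)
    then show ?thesis by (simp add: quad)
  qed
  also have "(\<Sum>i\<in>I. \<Sum>j\<in>I. c i j * incl_prob K d (card {i,j}))^2 =
     (\<Sum>i\<in>I. \<Sum>j\<in>I. \<Sum>k\<in>I. \<Sum>l\<in>I. c i j * c k l * (incl_prob K d (card {i,j}) * incl_prob K d (card {k,l})))"
    unfolding power2_eq_square sum_distrib_right sum_distrib_left
    by (intro sum.cong refl) (auto simp: mult_ac)
  finally show ?thesis unfolding T_def by (simp add: sum_subtractf right_diff_distrib)
qed

lemma var_Sdist_compl:
  fixes F :: "nat set \<Rightarrow> real"
  assumes "d \<le> K"
  shows "var (Sdist K d) (\<lambda>A. F ({1..K} - A)) = var (Sdist K (K - d)) F"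
proof -
  define \<phi> where "\<phi> A = {1..K} - A" for A :: "nat set"
  have inj: "inj_on \<phi> (ksubsets K d)" unfolding \<phi>_def inj_on_def by blast
  have "\<phi> ` ksubsets K d = ksubsets K (K - d)"
  proof
    show "\<phi> ` ksubsets K d \<subseteq> ksubsets K (K - d)"
      unfolding \<phi>_def by (auto simp: card_Diff_subset finite_subset)
    show "ksubsets K (K - d) \<subseteq> \<phi> ` ksubsets K d"
    proof
      fix x assume x: "x \<in> ksubsets K (K - d)"
      then have "finite x" using finite_subset by blast
      with x have "card ({1..K} - x) = d" using assms by (simp add: card_Diff_subset)
      moreover have "x = \<phi> ({1..K} - x)" using x unfolding \<phi>_def by auto
      ultimately show "x \<in> \<phi> ` ksubsets K d" by auto
    qed
  qed
  then have "map_pmf \<phi> (pmf_of_set (ksubsets K d)) = pmf_of_set (ksubsets K (K - d))"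
    using map_pmf_of_set_inj[OF inj ksubsets_nonempty[OF assms] finite_ksubsets] by simp
  then have "var (Sdist K (K - d)) F = var (measure_pmf (map_pmf \<phi> (pmf_of_set (ksubsets K d)))) F"
    unfolding Sdist_def by simp
  also have "\<dots> = var (Sdist K d) (\<lambda>A. F (\<phi> A))"
    unfolding var_def Sdist_def by simp
  finally show ?thesis unfolding \<phi>_def by simp
qed

lemma draw_ratio_abs_le:
  assumes "t \<le> 3" "6 \<le> K" "d \<le> K"
  shows "\<bar>draw_ratio K d t\<bar> \<le> 1"
  using assms by (simp add: draw_ratio_def abs_divide abs_le_iff)

lemma draw_ratio_diff_le:
  assumes "s \<le> 3" "t \<le> 3" "6 \<le> K" "d \<le> K"
  shows "\<bar>draw_ratio K d s - draw_ratio K d t\<bar> \<le> 12 / real K"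
proof -
  have ps: "real K / 2 \<le> real K - real s" "real K / 2 \<le> real K - real t" using assms by auto
  then have ps0: "real K - real s \<noteq> 0" "real K - real t \<noteq> 0" using assms by auto
  have "draw_ratio K d s - draw_ratio K d t =
      (real t - real s) * (real K - real d) / ((real K - real s) * (real K - real t))"
    unfolding draw_ratio_def using ps0 by (simp add: diff_frac_eq algebra_simps)
  then have "\<bar>draw_ratio K d s - draw_ratio K d t\<bar> =
      \<bar>real t - real s\<bar> * (real K - real d) / ((real K - real s) * (real K - real t))"
    using ps assms by (simp add: abs_divide abs_mult)
  also have "\<dots> \<le> (3 * real K) / ((real K / 2) * (real K / 2))"
  proof (rule frac_le)
    show "\<bar>real t - real s\<bar> * (real K - real d) \<le> 3 * real K"
      using assms by (intro mult_mono) auto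
    show "real K / 2 * (real K / 2) \<le> (real K - real s) * (real K - real t)"
      using ps assms by (intro mult_mono) auto
  qed (use assms in auto)
  also have "\<dots> = 12 / real K" using assms by (simp add: field_simps)
  finally show ?thesis .
qed

lemma incl_prob_abs_le:
  assumes "m \<le> 4" "6 \<le> K" "d \<le> K"
  shows "\<bar>incl_prob K d m\<bar> \<le> 1"
  unfolding incl_prob_def abs_prod using assms draw_ratio_abs_le
  by (intro prod_le_1) auto

lemma incl_prob_add:
  "incl_prob K d (a + b) = incl_prob K d a * (\<Prod>t<b. draw_ratio K d (a + t))"
  by (induction b) (simp_all add: incl_prob_Suc)

lemma incl_prob_add_diff_le:
  assumes "a + b \<le> 4" "6 \<le> K" "d \<le> K"
  shows "\<bar>incl_prob K d (a + b) - incl_prob K d a * incl_prob K d b\<bar> \<le> real b * (12 / real K)"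
proof -
  let ?f = "draw_ratio K d"
  have "\<bar>(\<Prod>t<b. ?f (a + t)) - (\<Prod>t<b. ?f t)\<bar> \<le> (\<Sum>t<b. \<bar>?f (a + t) - ?f t\<bar>)"
    using norm_prod_diff[of "{..<b}" "\<lambda>t. ?f (a + t)" "\<lambda>t. ?f t"] draw_ratio_abs_le assms by fastforce
  also have "\<dots> \<le> (\<Sum>t<b. 12 / real K)"
    using assms by (intro sum_mono draw_ratio_diff_le) auto
  finally have "\<bar>(\<Prod>t<b. ?f (a + t)) - incl_prob K d b\<bar> \<le> real b * (12 / real K)"
    by (simp add: incl_prob_def)
  moreover have "\<bar>incl_prob K d a\<bar> \<le> 1" using assms by (intro incl_prob_abs_le) auto
  ultimately have "\<bar>incl_prob K d a\<bar> * \<bar>(\<Prod>t<b. ?f (a + t)) - incl_prob K d b\<bar> \<le> 1 * (real b * (12 / real K))"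
    by (intro mult_mono) auto
  then show ?thesis unfolding incl_prob_add abs_mult[symmetric] right_diff_distrib by simp
qed

lemma incl_prob_cov_le:
  fixes i j k l :: nat
  assumes "6 \<le> K" "d \<le> K"
  shows "\<bar>incl_prob K d (card {i,j,k,l}) - incl_prob K d (card {i,j}) * incl_prob K d (card {k,l})\<bar>
          \<le> 2 * of_bool ({i,j} \<inter> {k,l} \<noteq> {}) + 24 / real K"
proof (cases "{i,j} \<inter> {k,l} = {}")
  case True
  have card2: "card {x, y} \<le> 2" for x y :: nat
    using card_length[of "[x, y]"] by simp
  have "card {i,j,k,l} = card ({i,j} \<union> {k,l})" by (simp add: insert_commute)
  also have "\<dots> = card {i,j} + card {k,l}" using True by (intro card_Un_disjoint) auto
  finally have "card {i,j,k,l} = card {i,j} + card {k,l}" .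
  then have "\<bar>incl_prob K d (card {i,j,k,l}) - incl_prob K d (card {i,j}) * incl_prob K d (card {k,l})\<bar>
      \<le> real (card {k,l}) * (12 / real K)"
    using incl_prob_add_diff_le[of "card {i,j}" "card {k,l}", OF _ assms] card2[of i j] card2[of k l] by simp
  also have "\<dots> \<le> 2 * (12 / real K)"
    using card2[of k l] by (intro mult_right_mono) auto
  finally show ?thesis using True by simp
next
  case False
  have c4: "card {i,j,k,l} \<le> 4" "card {i,j} \<le> 4" "card {k,l} \<le> 4"
    using card_length[of "[i,j,k,l]"] card_length[of "[i,j]"] card_length[of "[k,l]"] by simp_all
  have "\<bar>incl_prob K d (card {i,j,k,l}) - incl_prob K d (card {i,j}) * incl_prob K d (card {k,l})\<bar>
      \<le> \<bar>incl_prob K d (card {i,j,k,l})\<bar> + \<bar>incl_prob K d (card {i,j})\<bar> * \<bar>incl_prob K d (card {k,l})\<bar>"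
    unfolding abs_mult[symmetric] by (rule abs_triangle_ineq4)
  also have "\<dots> \<le> 1 + 1 * 1"
    using incl_prob_abs_le[OF c4(1) assms] incl_prob_abs_le[OF c4(2) assms] incl_prob_abs_le[OF c4(3) assms]
    by (intro add_mono mult_mono) auto
  finally have "\<bar>incl_prob K d (card {i,j,k,l}) - incl_prob K d (card {i,j}) * incl_prob K d (card {k,l})\<bar> \<le> 2"
    by simp
  then show ?thesis using False by (simp add: add_increasing2)
qed

lemma sum_overlap_le:
  fixes g :: "nat \<Rightarrow> nat \<Rightarrow> real"
  assumes fin: "finite I" and ij: "i \<in> I" "j \<in> I"
    and g0: "\<And>k l. k \<in> I \<Longrightarrow> l \<in> I \<Longrightarrow> 0 \<le> g k l"
    and row: "\<And>k. k \<in> I \<Longrightarrow> (\<Sum>l\<in>I. g k l) \<le> R"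
    and col: "\<And>l. l \<in> I \<Longrightarrow> (\<Sum>k\<in>I. g k l) \<le> R"
  shows "(\<Sum>k\<in>I. \<Sum>l\<in>I. g k l * of_bool ({i,j} \<inter> {k,l} \<noteq> {})) \<le> 4 * R"
proof -
  have delta: "(\<Sum>k\<in>I. of_bool (k = m) * F k) = F m" if "m \<in> I" for m and F :: "nat \<Rightarrow> real"
  proof -
    have "I \<inter> {k. k = m} = {m}" using that by auto
    then show ?thesis by (simp add: sum_of_bool_mult_eq fin)
  qed
  have "(\<Sum>k\<in>I. \<Sum>l\<in>I. g k l * of_bool ({i,j} \<inter> {k,l} \<noteq> {})) \<le>
        (\<Sum>k\<in>I. \<Sum>l\<in>I. of_bool (k = i) * g k l + of_bool (k = j) * g k l
                         + of_bool (l = i) * g k l + of_bool (l = j) * g k l)"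
    using g0 by (intro sum_mono) auto
  also have "\<dots> = (\<Sum>l\<in>I. g i l) + (\<Sum>l\<in>I. g j l) + (\<Sum>k\<in>I. g k i) + (\<Sum>k\<in>I. g k j)"
    using ij by (simp add: sum.distrib delta sum_distrib_left[symmetric])
  also have "\<dots> \<le> R + R + R + R" using row col ij by (intro add_mono) auto
  finally show ?thesis by simp
qed

lemma var_Sdist_quadratic_form_le:
  fixes c g :: "nat \<Rightarrow> nat \<Rightarrow> real"
  assumes K6: "6 \<le> K" and dK: "d \<le> K"
    and cg: "\<And>i j. i \<in> {1..K} \<Longrightarrow> j \<in> {1..K} \<Longrightarrow> \<bar>c i j\<bar> \<le> g i j"
    and row: "\<And>k. k \<in> {1..K} \<Longrightarrow> (\<Sum>l\<in>{1..K}. g k l) \<le> R"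
    and col: "\<And>l. l \<in> {1..K} \<Longrightarrow> (\<Sum>k\<in>{1..K}. g k l) \<le> R"
  shows "var (Sdist K d) (\<lambda>A. \<Sum>i\<in>{1..K}. \<Sum>j\<in>{1..K}. of_bool (i \<in> A) * of_bool (j \<in> A) * c i j)
          \<le> 32 * real K * R^2"
proof -
  define I where "I = {1..K}"
  have fin: "finite I" unfolding I_def by simp
  have g0: "0 \<le> g i j" if "i \<in> I" "j \<in> I" for i j using cg[of i j] that I_def by force
  define ov where "ov i j k l = (of_bool ({i,j} \<inter> {k,l} \<noteq> {}) :: real)" for i j k l :: nat
  have "1 \<in> I" using K6 unfolding I_def by simp
  then have R0: "0 \<le> R"
    using row[of 1] g0[of 1] sum_nonneg[of I "g 1"] unfolding I_def by force
  have tot: "(\<Sum>i\<in>I. \<Sum>j\<in>I. g i j) \<le> real K * R"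
    using sum_mono[of I "\<lambda>i. \<Sum>j\<in>I. g i j" "\<lambda>_. R"] row unfolding I_def by simp
  have tot0: "0 \<le> (\<Sum>i\<in>I. \<Sum>j\<in>I. g i j)" using g0 by (intro sum_nonneg) auto
  have "var (Sdist K d) (\<lambda>A. \<Sum>i\<in>{1..K}. \<Sum>j\<in>{1..K}. of_bool (i \<in> A) * of_bool (j \<in> A) * c i j)
     = (\<Sum>i\<in>I. \<Sum>j\<in>I. \<Sum>k\<in>I. \<Sum>l\<in>I. c i j * c k l *
        (incl_prob K d (card {i,j,k,l}) - incl_prob K d (card {i,j}) * incl_prob K d (card {k,l})))"
    unfolding I_def by (rule var_Sdist_quadratic_form[OF dK])
  also have "\<dots> \<le> (\<Sum>i\<in>I. \<Sum>j\<in>I. \<Sum>k\<in>I. \<Sum>l\<in>I. g i j * g k l * (2 * ov i j k l + 24 / real K))"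
  proof (intro sum_mono)
    fix i j k l assume h: "i \<in> I" "j \<in> I" "k \<in> I" "l \<in> I"
    let ?e = "incl_prob K d (card {i,j,k,l}) - incl_prob K d (card {i,j}) * incl_prob K d (card {k,l})"
    have "c i j * c k l * ?e \<le> \<bar>c i j\<bar> * \<bar>c k l\<bar> * \<bar>?e\<bar>"
      by (simp add: abs_mult[symmetric])
    also have "\<dots> \<le> g i j * g k l * (2 * ov i j k l + 24 / real K)"
      using cg h g0 incl_prob_cov_le[OF K6 dK, of i j k l] unfolding I_def ov_def
      by (intro mult_mono) (auto intro: mult_mono)
    finally show "c i j * c k l * ?e \<le> g i j * g k l * (2 * ov i j k l + 24 / real K)" .
  qed
  also have "\<dots> = (\<Sum>i\<in>I. \<Sum>j\<in>I. \<Sum>k\<in>I. \<Sum>l\<in>I. 2 * (g i j * (g k l * ov i j k l)))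
        + (\<Sum>i\<in>I. \<Sum>j\<in>I. \<Sum>k\<in>I. \<Sum>l\<in>I. 24 / real K * (g k l * g i j))"
    by (simp only: distrib_left mult_ac sum.distrib)
  also have "\<dots> = 2 * (\<Sum>i\<in>I. \<Sum>j\<in>I. g i j * (\<Sum>k\<in>I. \<Sum>l\<in>I. g k l * ov i j k l))
        + 24 / real K * ((\<Sum>i\<in>I. \<Sum>j\<in>I. g i j) * (\<Sum>k\<in>I. \<Sum>l\<in>I. g k l))"
    by (simp only: sum_distrib_left sum_distrib_right mult.assoc)
  also have "\<dots> \<le> 2 * (\<Sum>i\<in>I. \<Sum>j\<in>I. g i j * (4 * R)) + 24 / real K * ((real K * R) * (real K * R))"
  proof (intro add_mono mult_left_mono sum_mono mult_mono)
    fix i j assume "i \<in> I" "j \<in> I"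
    then show "(\<Sum>k\<in>I. \<Sum>l\<in>I. g k l * ov i j k l) \<le> 4 * R"
      unfolding ov_def using row col unfolding I_def by (intro sum_overlap_le) (auto simp: g0[unfolded I_def])
  qed (use tot tot0 g0 R0 in auto)
  also have "\<dots> = 8 * R * (\<Sum>i\<in>I. \<Sum>j\<in>I. g i j) + 24 * real K * R^2"
    using K6 by (simp add: sum_distrib_left sum_distrib_right power2_eq_square algebra_simps)
  also have "\<dots> \<le> 8 * R * (real K * R) + 24 * real K * R^2" using tot R0 by (intro add_right_mono mult_left_mono) auto
  finally show ?thesis by (simp add: power2_eq_square algebra_simps)
qed

section \<open>Geometrically decaying coefficients\<close>

lemma sum_power_le_inverse:
  fixes a :: real
  assumes "0 \<le> a" "a < 1"
  shows "(\<Sum>n<N. a ^ n) \<le> 1 / (1 - a)"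
proof -
  have "(\<Sum>n<N. a ^ n) = (1 - a ^ N) / (1 - a)" using assms by (simp add: sum_gp_strict)
  also have "\<dots> \<le> 1 / (1 - a)" using assms by (intro divide_right_mono) auto
  finally show ?thesis .
qed

lemma sum_power_dist_le:
  fixes a :: real
  assumes "0 \<le> a" "a < 1"
  shows "(\<Sum>j\<in>{1..K}. a ^ nat \<bar>int i - int j\<bar>) \<le> 2 / (1 - a)"
proof -
  have eq: "a ^ nat \<bar>int i - int j\<bar> = (if j \<le> i then a ^ (i - j) else a ^ (j - i))" for j
    by (cases "j \<le> i") (auto simp: nat_diff_distrib')
  have "(\<Sum>j\<in>{1..K}. a ^ nat \<bar>int i - int j\<bar>) =
      (\<Sum>j\<in>{1..K} \<inter> {j. j \<le> i}. a ^ (i - j)) + (\<Sum>j\<in>{1..K} \<inter> - {j. j \<le> i}. a ^ (j - i))"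
    unfolding eq by (rule sum.If_cases) simp
  also have "(\<Sum>j\<in>{1..K} \<inter> {j. j \<le> i}. a ^ (i - j)) \<le> (\<Sum>n<Suc i. a ^ n)"
  proof (rule sum_le_included[where i = "\<lambda>n. i - n"])
    show "\<forall>j\<in>{1..K} \<inter> {j. j \<le> i}. \<exists>n\<in>{..<Suc i}. i - n = j \<and> a ^ (i - j) \<le> a ^ n"
      by (auto intro!: bexI[where x = "i - _"])
  qed (use assms in auto)
  also have "(\<Sum>j\<in>{1..K} \<inter> - {j. j \<le> i}. a ^ (j - i)) \<le> (\<Sum>n<Suc K. a ^ n)"
  proof (rule sum_le_included[where i = "\<lambda>n. i + n"])
    show "\<forall>j\<in>{1..K} \<inter> - {j. j \<le> i}. \<exists>n\<in>{..<Suc K}. i + n = j \<and> a ^ (j - i) \<le> a ^ n"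
      by (auto intro!: bexI[where x = "_ - i"])
  qed (use assms in auto)
  finally show ?thesis
    using sum_power_le_inverse[OF assms, of "Suc i"] sum_power_le_inverse[OF assms, of "Suc K"] by simp
qed

lemma var_Sdist_decaying_form_le:
  fixes c :: "nat \<Rightarrow> nat \<Rightarrow> real" and a B :: real
  assumes K6: "6 \<le> K" and dK: "d \<le> K" and a: "0 \<le> a" "a < 1" and B: "0 \<le> B"
    and c: "\<And>i j. i \<in> {1..K} \<Longrightarrow> j \<in> {1..K} \<Longrightarrow> \<bar>c i j\<bar> \<le> B / real K * a ^ nat \<bar>int i - int j\<bar>"
  shows "var (Sdist K d) (\<lambda>A. \<Sum>i\<in>{1..K}. \<Sum>j\<in>{1..K}. of_bool (i \<in> A) * of_bool (j \<in> A) * c i j)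
          \<le> 32 * (2 * B / (1 - a))^2 / real K"
proof -
  define R where "R = B / real K * (2 / (1 - a))"
  have row: "(\<Sum>l\<in>{1..K}. B / real K * a ^ nat \<bar>int k - int l\<bar>) \<le> R" for k
    unfolding R_def sum_distrib_left[symmetric] using sum_power_dist_le[OF a] B
    by (intro mult_left_mono) auto
  have col: "(\<Sum>k\<in>{1..K}. B / real K * a ^ nat \<bar>int k - int l\<bar>) \<le> R" for l
    using row[of l] by (simp add: abs_minus_commute)
  have "var (Sdist K d) (\<lambda>A. \<Sum>i\<in>{1..K}. \<Sum>j\<in>{1..K}. of_bool (i \<in> A) * of_bool (j \<in> A) * c i j)
      \<le> 32 * real K * R^2"
    by (rule var_Sdist_quadratic_form_le[OF K6 dK c row col])
  also have "\<dots> = 32 * (2 * B / (1 - a))^2 / real K"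
    using K6 a unfolding R_def by (simp add: power2_eq_square divide_simps)
  finally show ?thesis .
qed

lemma var_Sdist_compl_decaying_form_le:
  fixes c :: "nat \<Rightarrow> nat \<Rightarrow> real" and a B :: real
  assumes K6: "6 \<le> K" and dK: "d \<le> K" and a: "0 \<le> a" "a < 1" and B: "0 \<le> B"
    and c: "\<And>i j. i \<in> {1..K} \<Longrightarrow> j \<in> {1..K} \<Longrightarrow> \<bar>c i j\<bar> \<le> B / real K * a ^ nat \<bar>int i - int j\<bar>"
  shows "var (Sdist K d) (\<lambda>A. \<Sum>i\<in>{1..K}. \<Sum>j\<in>{1..K}. (1 - of_bool (i \<in> A)) * (1 - of_bool (j \<in> A)) * c i j)
          \<le> 32 * (2 * B / (1 - a))^2 / real K"
proof -
  define T where "T A = (\<Sum>i\<in>{1..K}. \<Sum>j\<in>{1..K}. of_bool (i \<in> A) * of_bool (j \<in> A) * c i j)" for A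
  have "(\<lambda>A. \<Sum>i\<in>{1..K}. \<Sum>j\<in>{1..K}. (1 - of_bool (i \<in> A)) * (1 - of_bool (j \<in> A)) * c i j) =
      (\<lambda>A. T ({1..K} - A))"
    unfolding T_def by (intro ext sum.cong refl) auto
  moreover have "var (Sdist K d) (\<lambda>A. T ({1..K} - A)) = var (Sdist K (K - d)) T"
    by (rule var_Sdist_compl[OF dK])
  moreover have "var (Sdist K (K - d)) T \<le> 32 * (2 * B / (1 - a))^2 / real K"
    unfolding T_def by (rule var_Sdist_decaying_form_le[OF K6 _ a B c]) simp
  ultimately show ?thesis by simp
qed

lemma tendsto_var_Sdist_decaying_forms:
  fixes c :: "nat \<Rightarrow> nat \<Rightarrow> nat \<Rightarrow> real" and d :: "nat \<Rightarrow> nat" and a B :: real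
  assumes dK: "\<And>K. d K \<le> K" and a: "0 \<le> a" "a < 1" and B: "0 \<le> B"
    and c: "\<And>K i j. i \<in> {1..K} \<Longrightarrow> j \<in> {1..K} \<Longrightarrow> \<bar>c K i j\<bar> \<le> B / real K * a ^ nat \<bar>int i - int j\<bar>"
  shows "(\<lambda>K. var (Sdist K (d K)) (\<lambda>A. \<Sum>i\<in>{1..K}. \<Sum>j\<in>{1..K}.
            of_bool (i \<in> A) * of_bool (j \<in> A) * c K i j)) \<longlonglongrightarrow> 0"
    and "(\<lambda>K. var (Sdist K (d K)) (\<lambda>A. \<Sum>i\<in>{1..K}. \<Sum>j\<in>{1..K}.
            (1 - of_bool (i \<in> A)) * (1 - of_bool (j \<in> A)) * c K i j)) \<longlonglongrightarrow> 0"
proof -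
  have lim: "x \<longlonglongrightarrow> 0"
    if "\<And>K. 6 \<le> K \<Longrightarrow> x K \<le> 32 * (2 * B / (1 - a))^2 / real K" "\<And>K. 0 \<le> x K"
    for x :: "nat \<Rightarrow> real"
  proof (rule tendsto_sandwich[of "\<lambda>_. 0" _ _ "\<lambda>K. 32 * (2 * B / (1 - a))^2 / real K"])
    show "\<forall>\<^sub>F K in sequentially. x K \<le> 32 * (2 * B / (1 - a))^2 / real K"
      using eventually_ge_at_top[of "6::nat"] by eventually_elim (rule that(1))
  qed (use that(2) lim_const_over_n in auto)
  show "(\<lambda>K. var (Sdist K (d K)) (\<lambda>A. \<Sum>i\<in>{1..K}. \<Sum>j\<in>{1..K}.
            of_bool (i \<in> A) * of_bool (j \<in> A) * c K i j)) \<longlonglongrightarrow> 0"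
    by (rule lim[OF var_Sdist_decaying_form_le[OF _ dK a B c] var_nonneg])
  show "(\<lambda>K. var (Sdist K (d K)) (\<lambda>A. \<Sum>i\<in>{1..K}. \<Sum>j\<in>{1..K}.
            (1 - of_bool (i \<in> A)) * (1 - of_bool (j \<in> A)) * c K i j)) \<longlonglongrightarrow> 0"
    by (rule lim[OF var_Sdist_compl_decaying_form_le[OF _ dK a B c] var_nonneg])
qed

section \<open>Autoregressive variance ratios\<close>

lemma ar_quadratic_form_le:
  fixes p :: "nat \<Rightarrow> real" and \<rho> :: real
  assumes "\<bar>\<rho>\<bar> < 1"
  shows "(\<Sum>i\<in>{1..K}. \<Sum>j\<in>{1..K}. p i * p j * \<rho> ^ nat \<bar>int i - int j\<bar>)
    \<le> 2 / (1 - \<bar>\<rho>\<bar>) * (\<Sum>i\<in>{1..K}. (p i)^2)"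
proof -
  define G where "G = 2 / (1 - \<bar>\<rho>\<bar>)"
  define e where "e i j = \<bar>\<rho>\<bar> ^ nat \<bar>int i - int j\<bar>" for i j :: nat
  have e0: "0 \<le> e i j" for i j unfolding e_def by simp
  have row: "(\<Sum>j\<in>{1..K}. e i j) \<le> G" and col: "(\<Sum>j\<in>{1..K}. e j i) \<le> G" for i
    unfolding e_def G_def using sum_power_dist_le[where a = "\<bar>\<rho>\<bar>" and K = K and i = i] assms
    by (simp_all add: abs_minus_commute)
  text \<open>\<open>|p\<^sub>i p\<^sub>j| \<le> (p\<^sub>i\<^sup>2 + p\<^sub>j\<^sup>2)/2\<close> reduces the form to row and column sums of \<open>e\<close>.\<close>
  have "(\<Sum>i\<in>{1..K}. \<Sum>j\<in>{1..K}. p i * p j * \<rho> ^ nat \<bar>int i - int j\<bar>)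
      \<le> (\<Sum>i\<in>{1..K}. \<Sum>j\<in>{1..K}. ((p i)^2 / 2) * e i j + ((p j)^2 / 2) * e i j)"
  proof (intro sum_mono)
    fix i j
    have "p i * p j * \<rho> ^ nat \<bar>int i - int j\<bar> \<le> \<bar>p i\<bar> * \<bar>p j\<bar> * e i j"
      unfolding e_def by (simp add: abs_mult[symmetric] power_abs[symmetric])
    also have "\<dots> \<le> (((p i)^2 + (p j)^2) / 2) * e i j"
      using sum_squares_bound[of "\<bar>p i\<bar>" "\<bar>p j\<bar>"] e0 by (intro mult_right_mono) auto
    finally show "p i * p j * \<rho> ^ nat \<bar>int i - int j\<bar> \<le> ((p i)^2 / 2) * e i j + ((p j)^2 / 2) * e i j"
      by (simp add: field_simps)
  qed
  also have "\<dots> = (\<Sum>i\<in>{1..K}. ((p i)^2 / 2) * (\<Sum>j\<in>{1..K}. e i j))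
      + (\<Sum>j\<in>{1..K}. ((p j)^2 / 2) * (\<Sum>i\<in>{1..K}. e i j))"
    by (simp only: sum.distrib sum_distrib_left sum.swap[of "\<lambda>i j. (p j)^2 / 2 * e i j"])
  also have "\<dots> \<le> (\<Sum>i\<in>{1..K}. ((p i)^2 / 2) * G) + (\<Sum>j\<in>{1..K}. ((p j)^2 / 2) * G)"
    using row col by (intro add_mono sum_mono mult_left_mono) auto
  also have "\<dots> = G * (\<Sum>i\<in>{1..K}. (p i)^2)"
    by (simp add: sum_distrib_left sum_distrib_right field_simps sum.distrib[symmetric])
  finally show ?thesis unfolding G_def .
qed

lemma sum_off_diagonal:
  fixes f :: "'a \<Rightarrow> 'a \<Rightarrow> 'b :: ab_group_add"
  assumes "finite I"
  shows "(\<Sum>i\<in>I. \<Sum>j\<in>I-{i}. f i j) = (\<Sum>i\<in>I. \<Sum>j\<in>I. f i j) - (\<Sum>i\<in>I. f i i)"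
  using assms by (simp add: sum.remove sum_subtractf[symmetric])

lemma convergent_ratio_if_ereal_tendsto:
  fixes s Q :: "nat \<Rightarrow> real" and l :: ereal
  assumes \<epsilon>: "0 < \<epsilon>" "\<And>K. K \<ge> 1 \<Longrightarrow> \<epsilon> < s K" and G: "0 \<le> G" "\<And>K. K \<ge> 1 \<Longrightarrow> s K \<le> G * Q K"
    and B: "\<And>K. K \<ge> 1 \<Longrightarrow> Q K \<le> B"
    and l: "((\<lambda>K. ereal ((s K - Q K) / Q K)) \<longlongrightarrow> l) sequentially"
  shows "convergent (\<lambda>K. Q K / s K)"
proof -
  have Q0: "0 < Q K" if "K \<ge> 1" for K
    using G \<epsilon> that by (smt (verit) mult_nonneg_nonpos)
  have B0: "0 < B" using Q0[of 1] B[of 1] by simp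
  define x where "x K = (s K - Q K) / Q K" for K
  have x_eq: "x K = s K / Q K - 1" if "K \<ge> 1" for K
    using Q0[OF that] unfolding x_def by (simp add: field_simps)
  have x_le: "x K \<le> G - 1" if "K \<ge> 1" for K
    using G(2)[OF that] Q0[OF that] unfolding x_eq[OF that] by (simp add: divide_le_eq mult.commute)
  have x_ge: "\<epsilon> / B - 1 \<le> x K" if "K \<ge> 1" for K
  proof -
    have "\<epsilon> / B \<le> \<epsilon> / Q K" using B[OF that] Q0[OF that] \<epsilon> by (intro divide_left_mono) auto
    also have "\<dots> \<le> s K / Q K" using \<epsilon>(2)[OF that] Q0[OF that] by (intro divide_right_mono) auto
    finally show ?thesis unfolding x_eq[OF that] by simp
  qed
  have l': "((\<lambda>K. ereal (x K)) \<longlongrightarrow> l) sequentially" using l unfolding x_def .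
  text \<open>The bounds on \<open>x\<close> make the extended-real limit finite.\<close>
  have "l \<le> ereal (G - 1)"
  proof (rule tendsto_upperbound[OF l'])
    show "\<forall>\<^sub>F K in sequentially. ereal (x K) \<le> ereal (G - 1)"
      using eventually_ge_at_top[of "1::nat"] by eventually_elim (simp add: x_le)
  qed simp
  moreover have lo: "ereal (\<epsilon> / B - 1) \<le> l"
  proof (rule tendsto_lowerbound[OF l'])
    show "\<forall>\<^sub>F K in sequentially. ereal (\<epsilon> / B - 1) \<le> ereal (x K)"
      using eventually_ge_at_top[of "1::nat"] by eventually_elim (simp add: x_ge)
  qed simp
  ultimately obtain L where L: "l = ereal L" by (cases l) auto
  have "0 < \<epsilon> / B" using \<epsilon> B0 by simp
  then have "1 + L > 0" using lo unfolding L by simp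
  then have "(\<lambda>K. 1 / (1 + x K)) \<longlonglongrightarrow> 1 / (1 + L)"
    using l' unfolding L by (intro tendsto_intros) auto
  moreover have "\<forall>\<^sub>F K in sequentially. 1 / (1 + x K) = Q K / s K"
    using eventually_ge_at_top[of "1::nat"]
    by eventually_elim (use Q0 \<epsilon> x_eq in auto)
  ultimately show ?thesis by (metis Lim_transform_eventually convergentI)
qed

lemma abs_mult_le_of_abs_le_div_sqrt:
  fixes x y C :: real
  assumes "\<bar>x\<bar> \<le> C / sqrt (real K)" "\<bar>y\<bar> \<le> C / sqrt (real K)"
  shows "\<bar>x * y\<bar> \<le> C^2 / real K"
proof -
  have "\<bar>x * y\<bar> \<le> (C / sqrt (real K)) * (C / sqrt (real K))"
    unfolding abs_mult using assms by (intro mult_mono) (auto intro: order_trans[OF abs_ge_zero])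
  also have "\<dots> = C^2 / real K" by (simp add: power2_eq_square)
  finally show ?thesis .
qed

lemma sum_square_le_of_abs_le_div_sqrt:
  fixes p :: "nat \<Rightarrow> real"
  assumes "\<And>i. i \<in> {1..K} \<Longrightarrow> \<bar>p i\<bar> \<le> C / sqrt (real K)" "1 \<le> K"
  shows "(\<Sum>i\<in>{1..K}. (p i)^2) \<le> C^2"
proof -
  have "(p i)^2 \<le> C^2 / real K" if "i \<in> {1..K}" for i
    using abs_mult_le_of_abs_le_div_sqrt[OF assms(1)[OF that] assms(1)[OF that]]
    by (simp add: power2_eq_square abs_mult abs_mult_self_eq)
  then have "(\<Sum>i\<in>{1..K}. (p i)^2) \<le> (\<Sum>i\<in>{1..K}. C^2 / real K)"
    by (intro sum_mono)
  also have "\<dots> = C^2" using assms(2) by simp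
  finally show ?thesis .
qed

theorem mainTheorem9:
  fixes M :: "nat \<Rightarrow> 'a measure"
    and W :: "nat \<Rightarrow> nat \<Rightarrow> 'a \<Rightarrow> real"
    and \<pi> :: "nat \<Rightarrow> nat \<Rightarrow> real"
    and d1 :: "nat \<Rightarrow> nat"
    and r \<rho> :: real
  assumes prob: "\<And>K. prob_space (M K)"
    and meas: "\<And>K i. i \<in> {1..K} \<Longrightarrow> W K i \<in> borel_measurable (M K)"
    and sq_int: "\<And>K i. i \<in> {1..K} \<Longrightarrow> integrable (M K) (\<lambda>x. (W K i x)^2)"
    and S_d1: "\<And>K. d1 K \<le> K"
    and L1: "filterlim d1 at_top sequentially"
    and L2: "(\<lambda>K. real (K - d1 K) / real (d1 K)) \<longlonglongrightarrow> r" and r_pos: "0 < r"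
    and rho: "-1 < \<rho>" "\<rho> < 1"
    and AR1: "\<And>K i j. i \<in> {1..K} \<Longrightarrow> j \<in> {1..K} \<Longrightarrow>
               cov (M K) (W K i) (W K j) = \<rho> ^ nat \<bar>int i - int j\<bar>"
    and AR2: "\<exists>C. \<forall>K. \<forall>i\<in>{1..K}. \<bar>\<pi> K i\<bar> \<le> C / sqrt (real K)"
    and AR3: "\<exists>l::ereal. ((\<lambda>K. ereal ((\<Sum>i\<in>{1..K}. \<Sum>j\<in>{1..K}-{i}.
                  \<pi> K i * \<pi> K j * \<rho> ^ nat \<bar>int i - int j\<bar>) / (\<Sum>i\<in>{1..K}. (\<pi> K i)^2)))
                \<longlongrightarrow> l) sequentially"
    and AR4: "\<exists>\<epsilon>>0. \<forall>K\<ge>1. var (M K) (\<lambda>x. \<Sum>i\<in>{1..K}. \<pi> K i * W K i x) > \<epsilon>"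
  shows
    "(\<exists>\<epsilon> Mb. 0 < \<epsilon> \<and> \<epsilon> \<le> Mb \<and> (\<forall>K\<ge>1.
        \<epsilon> \<le> var (M K) (\<lambda>x. \<Sum>i\<in>{1..K}. \<pi> K i * W K i x) \<and>
        var (M K) (\<lambda>x. \<Sum>i\<in>{1..K}. \<pi> K i * W K i x) \<le> Mb))
   \<and> (\<lambda>K. var (Sdist K (d1 K)) (\<lambda>A. \<Sum>i\<in>{1..K}. \<Sum>j\<in>{1..K}.
          of_bool (i \<in> A) * of_bool (j \<in> A) *
          cov (M K) (\<lambda>x. \<pi> K i * W K i x) (\<lambda>x. \<pi> K j * W K j x))) \<longlonglongrightarrow> 0
   \<and> (\<lambda>K. var (Sdist K (d1 K)) (\<lambda>A. \<Sum>i\<in>{1..K}. \<Sum>j\<in>{1..K}.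
          (1 - of_bool (i \<in> A)) * (1 - of_bool (j \<in> A)) *
          cov (M K) (\<lambda>x. \<pi> K i * W K i x) (\<lambda>x. \<pi> K j * W K j x))) \<longlonglongrightarrow> 0
   \<and> convergent (\<lambda>K. (\<Sum>i\<in>{1..K}. var (M K) (\<lambda>x. \<pi> K i * W K i x))
                      / var (M K) (\<lambda>x. \<Sum>i\<in>{1..K}. \<pi> K i * W K i x))"
proof -
  obtain C where C: "\<And>K i. i \<in> {1..K} \<Longrightarrow> \<bar>\<pi> K i\<bar> \<le> C / sqrt (real K)" using AR2 by blast
  obtain \<epsilon> where \<epsilon>: "0 < \<epsilon>" "\<And>K. K \<ge> 1 \<Longrightarrow> \<epsilon> < var (M K) (\<lambda>x. \<Sum>i\<in>{1..K}. \<pi> K i * W K i x)"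
    using AR4 by auto
  obtain l where l: "((\<lambda>K. ereal ((\<Sum>i\<in>{1..K}. \<Sum>j\<in>{1..K}-{i}.
      \<pi> K i * \<pi> K j * \<rho> ^ nat \<bar>int i - int j\<bar>) / (\<Sum>i\<in>{1..K}. (\<pi> K i)^2))) \<longlongrightarrow> l) sequentially"
    using AR3 by blast
  define s where "s K = var (M K) (\<lambda>x. \<Sum>i\<in>{1..K}. \<pi> K i * W K i x)" for K
  define Q where "Q K = (\<Sum>i\<in>{1..K}. (\<pi> K i)^2)" for K
  define G where "G = 2 / (1 - \<bar>\<rho>\<bar>)"
  have \<rho>1: "\<bar>\<rho>\<bar> < 1" using rho by simp
  have cov: "cov (M K) (\<lambda>x. \<pi> K i * W K i x) (\<lambda>x. \<pi> K j * W K j x) = \<pi> K i * \<pi> K j * \<rho> ^ nat \<bar>int i - int j\<bar>"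
    if "i \<in> {1..K}" "j \<in> {1..K}" for K i j
    using cov_scaled[of "M K" "\<pi> K i" "W K i" "\<pi> K j" "W K j"] AR1[OF that] by simp
  have s_eq: "s K = (\<Sum>i\<in>{1..K}. \<Sum>j\<in>{1..K}. \<pi> K i * \<pi> K j * \<rho> ^ nat \<bar>int i - int j\<bar>)" for K
    unfolding s_def using prob meas sq_int AR1 by (rule var_weighted_sum_ar)
  have Q_eq: "(\<Sum>i\<in>{1..K}. var (M K) (\<lambda>x. \<pi> K i * W K i x)) = Q K" for K
    unfolding Q_def var_eq_cov by (intro sum.cong refl) (simp add: cov power2_eq_square)
  have Q_le: "Q K \<le> C^2" if "K \<ge> 1" for K
    unfolding Q_def using C that by (rule sum_square_le_of_abs_le_div_sqrt)
  have s_le: "s K \<le> G * Q K" for K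
    unfolding s_eq Q_def G_def by (rule ar_quadratic_form_le[OF \<rho>1])
  have "\<bar>cov (M K) (\<lambda>x. \<pi> K i * W K i x) (\<lambda>x. \<pi> K j * W K j x)\<bar> \<le> C^2 / real K * \<bar>\<rho>\<bar> ^ nat \<bar>int i - int j\<bar>"
    if "i \<in> {1..K}" "j \<in> {1..K}" for K i j
    unfolding cov[OF that] abs_mult power_abs
    using abs_mult_le_of_abs_le_div_sqrt[OF C C, OF that] by (intro mult_right_mono) (auto simp: abs_mult)
  note P2_P3 = tendsto_var_Sdist_decaying_forms[OF S_d1 abs_ge_zero \<rho>1 zero_le_power2 this]
  have "0 \<le> G" using \<rho>1 by (simp add: G_def)
  have s_bounds: "\<epsilon> \<le> s K \<and> s K \<le> G * C^2" if "K \<ge> 1" for K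
  proof
    show "\<epsilon> \<le> s K" using \<epsilon>(2)[OF that] unfolding s_def by simp
    show "s K \<le> G * C^2" using s_le[of K] mult_left_mono[OF Q_le[OF that] \<open>0 \<le> G\<close>] by linarith
  qed
  then have "\<epsilon> \<le> G * C^2" by force
  moreover have "convergent (\<lambda>K. Q K / s K)"
  proof (rule convergent_ratio_if_ereal_tendsto[OF \<epsilon>(1) _ \<open>0 \<le> G\<close> s_le Q_le])
    show "\<epsilon> < s K" if "K \<ge> 1" for K using \<epsilon>(2)[OF that] unfolding s_def .
    have "(\<Sum>i\<in>{1..K}. \<Sum>j\<in>{1..K}-{i}. \<pi> K i * \<pi> K j * \<rho> ^ nat \<bar>int i - int j\<bar>) = s K - Q K" for K
      unfolding sum_off_diagonal[OF finite_atLeastAtMost] s_eq Q_def by (simp add: power2_eq_square)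
    then show "((\<lambda>K. ereal ((s K - Q K) / Q K)) \<longlongrightarrow> l) sequentially"
      using l unfolding Q_def by simp
  qed
  ultimately show ?thesis
    using P2_P3 \<epsilon>(1) s_bounds unfolding s_def[symmetric] Q_eq by blast
qed

end
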